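(* For any incentive-compatible selection mechanism $\mathcal{M}$ on directed forests, $Q(\mathcal{M})\le 4/5$.
   Context: Let $N$ be a finite set of $n$ vertices. A directed forest on $N$ is a directed acyclic graph on $N$ with every out-degree at most $1$; $\mathcal{F}^N$ is the set of such forests. $P(x;F)$ is the progeny of $x$ (number of vertices with a directed path to $x$, including $x$), $P^*(F)=\max_xP(x;F)$. A selection mechanism is a family (one for each $n$) of functions $\mathcal{M}:N\times\mathcal{F}^N\to[0,1]$ with $\sum_x\mathcal{M}(x;F)\le1$. It is incentive-compatible if $\mathcal{M}(x;F)=\mathcal{M}(x;F')$ whenever $F,F'$ differ only in the out-edge of $x$. Quality: $Q(\mathcal{M};F)=\sum_x\mathcal{M}(x;F)P(x;F)/P^*(F)$ and $Q(\mathcal{M})=\lim_{|N|\to\infty}\min_{F\in\mathcal{F}^N}Q(\mathcal{M};F)$. *)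

theory Defs
  imports Complex_Main
begin

definition vset :: "nat \<Rightarrow> nat set" where
  "vset n = {0..<n}"

definition is_forest :: "nat \<Rightarrow> (nat \<times> nat) set \<Rightarrow> bool" where
  "is_forest n F \<longleftrightarrow> F \<subseteq> vset n \<times> vset n \<and> acyclic F \<and>
     (\<forall>x \<in> vset n. card {y. (x, y) \<in> F} \<le> 1)"

definition forests :: "nat \<Rightarrow> (nat \<times> nat) set set" where
  "forests n = {F. is_forest n F}"

definition progeny :: "nat \<Rightarrow> nat \<Rightarrow> (nat \<times> nat) set \<Rightarrow> nat" where
  "progeny n x F = card {y \<in> vset n. (y, x) \<in> F\<^sup>*}"

definition max_progeny :: "nat \<Rightarrow> (nat \<times> nat) set \<Rightarrow> nat" where
  "max_progeny n F = Max ((\<lambda>x. progeny n x F) ` vset n)"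

definition selection_mechanism :: "(nat \<Rightarrow> nat \<Rightarrow> (nat \<times> nat) set \<Rightarrow> real) \<Rightarrow> bool" where
  "selection_mechanism M \<longleftrightarrow> (\<forall>n. \<forall>F \<in> forests n.
     (\<forall>x \<in> vset n. 0 \<le> M n x F \<and> M n x F \<le> 1) \<and> (\<Sum>x \<in> vset n. M n x F) \<le> 1)"

definition incentive_compatible :: "(nat \<Rightarrow> nat \<Rightarrow> (nat \<times> nat) set \<Rightarrow> real) \<Rightarrow> bool" where
  "incentive_compatible M \<longleftrightarrow> (\<forall>n. \<forall>F \<in> forests n. \<forall>F' \<in> forests n. \<forall>x \<in> vset n.
     {e \<in> F. fst e \<noteq> x} = {e \<in> F'. fst e \<noteq> x} \<longrightarrow> M n x F = M n x F')"

definition quality :: "(nat \<Rightarrow> nat \<Rightarrow> (nat \<times> nat) set \<Rightarrow> real) \<Rightarrow> nat \<Rightarrow> (nat \<times> nat) set \<Rightarrow> real" where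
  "quality M n F = (\<Sum>x \<in> vset n. M n x F * real (progeny n x F)) / real (max_progeny n F)"

definition min_quality :: "(nat \<Rightarrow> nat \<Rightarrow> (nat \<times> nat) set \<Rightarrow> real) \<Rightarrow> nat \<Rightarrow> real" where
  "min_quality M n = Min ((\<lambda>F. quality M n F) ` forests n)"

end

theory Submission
  imports Defs
begin

text \<open>Consider the forest with the single edge 1 \<rightarrow> 0 and the path 1 \<rightarrow> 0 \<rightarrow> 2. They differ
  only in the out-edge of vertex 0, so an incentive-compatible mechanism selects 0 with the
  same probability m in both. In the first forest vertex 0 has maximal progeny 2 and all others
  progeny 1, so the quality is at most (1 + m)/2; in the second the maximum 3 is attained at
  vertex 2 while vertex 0 only has progeny 2, so the quality is at most (3 - m)/3. The smaller
  of these two bounds is at most 4/5 whatever m is.\<close>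

lemma finite_forests: "finite (forests n)"
proof -
  have "forests n \<subseteq> Pow (vset n \<times> vset n)"
    unfolding forests_def is_forest_def by auto
  then show ?thesis
    by (rule finite_subset) (simp add: vset_def)
qed

lemma in_forestsI:
  assumes "F \<subseteq> vset n \<times> vset n" and "acyclic F" and "single_valued F"
  shows "F \<in> forests n"
proof -
  have "card {y. (x, y) \<in> F} \<le> 1" for x
  proof -
    have "{y. (x, y) \<in> F} \<subseteq> {SOME y. (x, y) \<in> F}"
      using \<open>single_valued F\<close> by (auto simp: single_valued_def intro: someI2)
    then have "card {y. (x, y) \<in> F} \<le> card {SOME y. (x, y) \<in> F}"
      by (intro card_mono) simp_all
    then show ?thesis
      by simp
  qed
  then show ?thesis
    using assms by (simp add: forests_def is_forest_def)
qed

lemma progeny_le_max_progeny: "x \<in> vset n \<Longrightarrow> progeny n x F \<le> max_progeny n F"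
  unfolding max_progeny_def by (rule Max_ge) (auto simp: vset_def)

lemma min_quality_le_quality: "F \<in> forests n \<Longrightarrow> min_quality M n \<le> quality M n F"
  unfolding min_quality_def using finite_forests by (intro Min_le) auto

lemma quality_le_except_vertex:
  fixes p P :: real
  assumes M: "selection_mechanism M" and F: "F \<in> forests n" and z: "z \<in> vset n"
    and progeny_le: "\<And>x. x \<in> vset n - {z} \<Longrightarrow> progeny n x F \<le> p"
    and "0 \<le> p" and "0 < P" and P_le: "P \<le> max_progeny n F"
  shows "quality M n F \<le> (p + (progeny n z F - p) * M n z F) / P"
proof -
  have prob: "\<And>x. x \<in> vset n \<Longrightarrow> 0 \<le> M n x F" and total: "(\<Sum>x \<in> vset n. M n x F) \<le> 1"
    using M F by (auto simp: selection_mechanism_def)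
  have fin: "finite (vset n)"
    by (simp add: vset_def)
  let ?S = "\<Sum>x \<in> vset n. M n x F * progeny n x F"
  have "?S = M n z F * progeny n z F + (\<Sum>x \<in> vset n - {z}. M n x F * progeny n x F)"
    using fin z by (simp add: sum.remove)
  also have "\<dots> \<le> M n z F * progeny n z F + (\<Sum>x \<in> vset n - {z}. M n x F * p)"
    using prob progeny_le by (intro add_left_mono sum_mono mult_left_mono) auto
  also have "\<dots> = M n z F * progeny n z F + p * (\<Sum>x \<in> vset n - {z}. M n x F)"
    by (simp add: sum_distrib_left mult.commute)
  also have "\<dots> = M n z F * progeny n z F + p * ((\<Sum>x \<in> vset n. M n x F) - M n z F)"
    using fin z by (simp add: sum_diff1)
  also have "\<dots> \<le> p + (progeny n z F - p) * M n z F"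
    using mult_left_mono[OF total \<open>0 \<le> p\<close>] by (simp add: algebra_simps)
  finally have S: "?S \<le> p + (progeny n z F - p) * M n z F" .
  have "0 \<le> ?S"
    using prob by (intro sum_nonneg) auto
  then have "quality M n F \<le> ?S / P"
    unfolding quality_def using \<open>0 < P\<close> P_le by (intro divide_left_mono) auto
  also have "\<dots> \<le> (p + (progeny n z F - p) * M n z F) / P"
    using S \<open>0 < P\<close> by (simp add: divide_right_mono)
  finally show ?thesis .
qed

definition edge_forest :: "(nat \<times> nat) set" where
  "edge_forest = {(1, 0)}"

definition path_forest :: "(nat \<times> nat) set" where
  "path_forest = {(1, 0), (0, 2)}"

lemma rtrancl_edge_forest:
  "(y, x) \<in> edge_forest\<^sup>* \<longleftrightarrow> y = x \<or> (y = 1 \<and> x = 0)"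
  unfolding edge_forest_def by (auto simp: rtrancl_insert)

lemma rtrancl_path_forest:
  "(y, x) \<in> path_forest\<^sup>* \<longleftrightarrow> y = x \<or> (y = 1 \<and> x = 0) \<or> (y = 0 \<and> x = 2) \<or> (y = 1 \<and> x = 2)"
  unfolding path_forest_def by (auto simp: rtrancl_insert)

lemma edge_forest_in_forests: "3 \<le> n \<Longrightarrow> edge_forest \<in> forests n"
  by (intro in_forestsI) (auto simp: edge_forest_def vset_def single_valued_def intro: wf_acyclic)

lemma path_forest_in_forests: "3 \<le> n \<Longrightarrow> path_forest \<in> forests n"
  by (intro in_forestsI)
     (auto simp: path_forest_def vset_def rtrancl_insert single_valued_def intro: wf_acyclic)

lemma progeny_edge_forest:
  assumes "3 \<le> n" and "x \<in> vset n"
  shows "progeny n x edge_forest = (if x = 0 then 2 else 1)"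
proof -
  have "{y \<in> vset n. (y, x) \<in> edge_forest\<^sup>*} = (if x = 0 then {0, 1} else {x})"
    using assms by (auto simp: rtrancl_edge_forest vset_def)
  then show ?thesis
    by (simp add: progeny_def)
qed

lemma progeny_path_forest_0: "3 \<le> n \<Longrightarrow> progeny n 0 path_forest = 2"
proof -
  assume "3 \<le> n"
  then have "{y \<in> vset n. (y, 0) \<in> path_forest\<^sup>*} = {0, 1}"
    by (auto simp: rtrancl_path_forest vset_def)
  then show ?thesis
    by (simp add: progeny_def)
qed

lemma progeny_path_forest_2: "3 \<le> n \<Longrightarrow> progeny n 2 path_forest = 3"
proof -
  assume "3 \<le> n"
  then have "{y \<in> vset n. (y, 2) \<in> path_forest\<^sup>*} = {0, 1, 2}"
    by (auto simp: rtrancl_path_forest vset_def)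
  then show ?thesis
    by (simp add: progeny_def)
qed

lemma progeny_path_forest_le: "progeny n x path_forest \<le> 3"
proof -
  have "{y \<in> vset n. (y, x) \<in> path_forest\<^sup>*} \<subseteq> {0, 1, x}"
    by (auto simp: rtrancl_path_forest)
  then have "progeny n x path_forest \<le> card {0, 1, x}"
    unfolding progeny_def by (intro card_mono) auto
  also have "\<dots> \<le> 3"
    by (simp add: card_insert_if)
  finally show ?thesis .
qed

lemma min_quality_le_four_fifths:
  assumes M: "selection_mechanism M" and IC: "incentive_compatible M" and n: "3 \<le> n"
  shows "min_quality M n \<le> 4 / 5"
proof -
  have edge: "edge_forest \<in> forests n" and path: "path_forest \<in> forests n"
    using n by (simp_all add: edge_forest_in_forests path_forest_in_forests)
  have v0: "0 \<in> vset n" and v2: "2 \<in> vset n"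
    using n by (auto simp: vset_def)
  define m where "m = M n 0 edge_forest"
  have "{e \<in> edge_forest. fst e \<noteq> 0} = {e \<in> path_forest. fst e \<noteq> 0}"
    unfolding edge_forest_def path_forest_def by auto
  then have m_path: "M n 0 path_forest = m"
    using IC edge path v0 unfolding incentive_compatible_def m_def by blast
  have edge_bound: "quality M n edge_forest \<le> (1 + m) / 2"
    using quality_le_except_vertex[OF M edge v0, of 1 2]
      progeny_le_max_progeny[OF v0, of edge_forest]
    by (simp add: progeny_edge_forest[OF n] progeny_edge_forest[OF n v0] m_def)
  have path_bound: "quality M n path_forest \<le> (3 - m) / 3"
    using quality_le_except_vertex[OF M path v0, of 3 3]
      progeny_le_max_progeny[OF v2, of path_forest]
    by (simp add: progeny_path_forest_le progeny_path_forest_0[OF n]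
        progeny_path_forest_2[OF n] m_path algebra_simps)
  show ?thesis
  proof (cases "m \<le> 3 / 5")
    case True
    then have "(1 + m) / 2 \<le> 4 / 5"
      by simp
    then show ?thesis
      using edge_bound min_quality_le_quality[OF edge, of M] by linarith
  next
    case False
    then have "(3 - m) / 3 \<le> 4 / 5"
      by simp
    then show ?thesis
      using path_bound min_quality_le_quality[OF path, of M] by linarith
  qed
qed

theorem proposition1:
  fixes M :: "nat \<Rightarrow> nat \<Rightarrow> (nat \<times> nat) set \<Rightarrow> real" and L :: real
  assumes "selection_mechanism M"
    and "incentive_compatible M"
    and "(\<lambda>n. min_quality M n) \<longlonglongrightarrow> L"
  shows "L \<le> 4 / 5"
proof (rule LIMSEQ_le_const2[OF assms(3)])
  show "\<exists>N. \<forall>n\<ge>N. min_quality M n \<le> 4 / 5"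
    using min_quality_le_four_fifths[OF assms(1,2)] by blast
qed

end
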